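(* For every $D\in\mathrm{SL}(d+1,\mathbb R)\setminus\mathrm{SO}(d+1)$ there exist $n>0$, $R_0,R_1,\dots,R_n\in\mathrm{SO}(d+1)$ and $\alpha_1,\dots,\alpha_n\in\{-1,+1\}$ such that $$R_0D^{\alpha_1}R_1D^{\alpha_2}R_2\cdots R_{n-1}D^{\alpha_n}R_n=\mathrm{diag}(r_1,\dots,r_{d+1})$$ with $0<r_{d+1}<\min_{1\le i\le d}r_i$ and $\max_{1<i\le d}r_i^d<r_1\cdots r_d$. *)

theory Defs
  imports "Jordan_Normal_Form.Determinant"
begin

text \<open>Real (d+1)x(d+1) matrices; indices are 0-based in JNF.\<close>

definition SL_mat :: "nat \<Rightarrow> real mat set" where
  "SL_mat m = {A \<in> carrier_mat m m. det A = 1}"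

definition SO_mat :: "nat \<Rightarrow> real mat set" where
  "SO_mat m = {A \<in> carrier_mat m m. transpose_mat A * A = 1\<^sub>m m \<and> det A = 1}"

definition mat_inv :: "nat \<Rightarrow> real mat \<Rightarrow> real mat" where
  "mat_inv m A = (SOME B. B \<in> carrier_mat m m \<and> A * B = 1\<^sub>m m \<and> B * A = 1\<^sub>m m)"

definition mat_pm_pow :: "nat \<Rightarrow> real mat \<Rightarrow> int \<Rightarrow> real mat" where
  "mat_pm_pow m D a = (if a = 1 then D else mat_inv m D)"

fun word_prod :: "nat \<Rightarrow> real mat \<Rightarrow> (nat \<Rightarrow> real mat) \<Rightarrow> (nat \<Rightarrow> int) \<Rightarrow> nat \<Rightarrow> real mat" where
  "word_prod m D R a 0 = R 0"
| "word_prod m D R a (Suc k) = word_prod m D R a k * mat_pm_pow m D (a (Suc k)) * R (Suc k)"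

end

theory Submission
  imports Defs "Jordan_Normal_Form.Char_Poly"
begin

text \<open>Write \<open>D = U\<^sup>T S V\<^sup>T\<close> with \<open>U, V \<in> SO(d+1)\<close> and \<open>S = diag(s)\<close> positive (singular
  value decomposition; rotations suffice because \<open>det D > 0\<close>). Since \<open>D \<notin> SO(d+1)\<close> the
  \<open>s\<^sub>i\<close> are not all equal, and conjugating \<open>S\<close> by a permutation we may assume
  \<open>s\<^sub>1 > s\<^sub>d\<^sub>+\<^sub>1\<close>. If \<open>P\<close> is a rotation exchanging the first and last coordinate axes,
  then \<open>U D (V P\<^sup>T V\<^sup>T) D\<^sup>-\<^sup>1 (U\<^sup>T P) = S P\<^sup>T S\<^sup>-\<^sup>1 P = diag(s\<^sub>1/s\<^sub>d\<^sub>+\<^sub>1, 1, \<dots>, 1, s\<^sub>d\<^sub>+\<^sub>1/s\<^sub>1)\<close>,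
  which satisfies all the required inequalities.\<close>

section \<open>Orthogonal matrices\<close>

definition O_mat :: "nat \<Rightarrow> real mat set" where
  "O_mat n = {A \<in> carrier_mat n n. transpose_mat A * A = 1\<^sub>m n}"

lemma SO_mat_iff: "A \<in> SO_mat n \<longleftrightarrow> A \<in> O_mat n \<and> det A = 1"
  unfolding SO_mat_def O_mat_def by auto

lemma O_mat_carrier: "A \<in> O_mat n \<Longrightarrow> A \<in> carrier_mat n n"
  unfolding O_mat_def by auto

lemma O_mat_left_inverse: "A \<in> O_mat n \<Longrightarrow> transpose_mat A * A = 1\<^sub>m n"
  unfolding O_mat_def by auto

lemma O_mat_right_inverse: "A \<in> O_mat n \<Longrightarrow> A * transpose_mat A = 1\<^sub>m n"
  using mat_mult_left_right_inverse[of "transpose_mat A" n A] unfolding O_mat_def by auto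

lemma O_mat_transpose: "A \<in> O_mat n \<Longrightarrow> transpose_mat A \<in> O_mat n"
  using O_mat_right_inverse unfolding O_mat_def by auto

lemma O_mat_mult:
  assumes A: "A \<in> O_mat n" and B: "B \<in> O_mat n"
  shows "A * B \<in> O_mat n"
proof -
  have Ac: "A \<in> carrier_mat n n" and Bc: "B \<in> carrier_mat n n"
    using A B by (auto simp: O_mat_def)
  have "transpose_mat (A * B) * (A * B) = transpose_mat B * (transpose_mat A * A) * B"
    using Ac Bc by (simp add: transpose_mult[of A n n B n] assoc_mult_mat[of _ n n _ n _ n])
  also have "\<dots> = 1\<^sub>m n"
    using Bc by (simp add: O_mat_left_inverse[OF A] O_mat_left_inverse[OF B])
  finally show ?thesis using Ac Bc unfolding O_mat_def by simp
qed

lemma O_mat_det: assumes "A \<in> O_mat n" shows "det A = 1 \<or> det A = -1"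
proof -
  have A: "A \<in> carrier_mat n n" using assms by (rule O_mat_carrier)
  have "det A * det A = det (transpose_mat A * A)"
    using A by (simp add: det_mult[of _ n] det_transpose)
  also have "\<dots> = 1" using assms by (simp add: O_mat_def)
  finally show ?thesis by (metis square_eq_1_iff power2_eq_square)
qed

lemma SO_mat_mult: "A \<in> SO_mat n \<Longrightarrow> B \<in> SO_mat n \<Longrightarrow> A * B \<in> SO_mat n"
  by (auto simp: SO_mat_iff O_mat_mult det_mult[of _ n] O_mat_carrier)

lemma SO_mat_transpose: "A \<in> SO_mat n \<Longrightarrow> transpose_mat A \<in> SO_mat n"
  by (auto simp: SO_mat_iff O_mat_transpose det_transpose[OF O_mat_carrier])

lemma det_mat_diag: "det (mat_diag n f) = (\<Prod>i<n. (f i :: 'a :: comm_ring_1))"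
proof -
  have "det (mat_diag n f) = prod_list (diag_mat (mat_diag n f))"
    by (rule det_upper_triangular) (auto simp: upper_triangular_def mat_diag_def)
  also have "diag_mat (mat_diag n f) = map f [0..<n]"
    unfolding diag_mat_def mat_diag_def by (auto intro!: nth_equalityI)
  finally show ?thesis by (simp add: prod.distinct_set_conv_list[symmetric] atLeast0LessThan)
qed

lemma dim_mat_diag[simp]: "dim_row (mat_diag n f) = n" "dim_col (mat_diag n f) = n"
  unfolding mat_diag_def by auto

lemma transpose_mat_diag[simp]: "transpose_mat (mat_diag n f) = mat_diag n f"
  unfolding mat_diag_def by (rule eq_matI) auto

lemma diagonal_mat_eq_mat_diag:
  "A \<in> carrier_mat n n \<Longrightarrow> diagonal_mat A \<Longrightarrow> A = mat_diag n (\<lambda>i. A $$ (i,i))"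
  unfolding diagonal_mat_def mat_diag_def by (auto intro!: eq_matI)

lemma mat_inv_eqI:
  assumes D: "D \<in> carrier_mat n n" and X: "X \<in> carrier_mat n n"
    and DX: "D * X = 1\<^sub>m n" and XD: "X * D = 1\<^sub>m n"
  shows "mat_inv n D = X"
proof -
  let ?P = "\<lambda>B. B \<in> carrier_mat n n \<and> D * B = 1\<^sub>m n \<and> B * D = 1\<^sub>m n"
  obtain Y where Y: "?P Y" and YS: "(SOME B. ?P B) = Y"
    using someI[of ?P X] X DX XD by blast
  have "Y = Y * (D * X)" using Y unfolding DX by auto
  also have "\<dots> = X" using Y X D by (simp flip: assoc_mult_mat[of _ n n D n X n])
  finally show ?thesis unfolding mat_inv_def YS .
qed

text \<open>The reflection in the first coordinate has determinant \<open>-1\<close> and commutes with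
  diagonal matrices; composing with it turns orthogonal diagonalizations into rotational ones.\<close>

definition flip_mat :: "nat \<Rightarrow> real mat" where
  "flip_mat n = mat_diag n (\<lambda>i. if i = 0 then -1 else 1)"

lemma flip_mat_carrier[simp]: "flip_mat n \<in> carrier_mat n n"
  unfolding flip_mat_def by simp

lemma flip_mat_transpose[simp]: "transpose_mat (flip_mat n) = flip_mat n"
  unfolding flip_mat_def by simp

lemma flip_mat_conj_diag: "flip_mat n * mat_diag n f * flip_mat n = mat_diag n f"
  unfolding flip_mat_def mat_diag_diag by (intro arg_cong[of _ _ "mat_diag n"]) auto

lemma flip_mat_O_mat: "flip_mat n \<in> O_mat n"
proof -
  have "flip_mat n * flip_mat n = mat_diag n (\<lambda>_. 1)"
    unfolding flip_mat_def mat_diag_diag by (intro arg_cong[of _ _ "mat_diag n"]) auto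
  then show ?thesis by (simp add: O_mat_def)
qed

lemma det_flip_mat: assumes "0 < n" shows "det (flip_mat n) = -1"
proof -
  have "det (flip_mat n) = (\<Prod>i\<in>insert 0 ({..<n} - {0}). if i = 0 then -1 else 1)"
    unfolding flip_mat_def det_mat_diag using assms by (intro prod.cong) auto
  also have "\<dots> = -1" by (subst prod.insert) auto
  finally show ?thesis .
qed

lemma SO_mat_diagonalizes_if_O_mat_does:
  assumes Q: "Q \<in> O_mat n" and n: "0 < n"
  shows "\<exists>P \<in> SO_mat n. \<forall>A \<in> carrier_mat n n. \<forall>f.
           transpose_mat Q * A * Q = mat_diag n f \<longrightarrow> transpose_mat P * A * P = mat_diag n f"
proof (cases "det Q = 1")
  case True
  with Q show ?thesis by (auto simp: SO_mat_iff)
next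
  case False
  let ?F = "flip_mat n"
  have Qc: "Q \<in> carrier_mat n n" using Q by (rule O_mat_carrier)
  have "det (Q * ?F) = 1"
    using False O_mat_det[OF Q] Qc by (simp add: det_mult[of _ n] det_flip_mat[OF n])
  moreover have "Q * ?F \<in> O_mat n" using Q flip_mat_O_mat by (rule O_mat_mult)
  moreover have "transpose_mat (Q * ?F) * A * (Q * ?F) = ?F * (transpose_mat Q * A * Q) * ?F"
    if "A \<in> carrier_mat n n" for A
    using Qc that by (simp add: transpose_mult[of Q n n ?F n] assoc_mult_mat[of _ n n _ n _ n])
  ultimately show ?thesis by (intro bexI[of _ "Q * ?F"]) (auto simp: SO_mat_iff flip_mat_conj_diag)
qed

section \<open>The spectral theorem\<close>

definition householder :: "nat \<Rightarrow> real vec \<Rightarrow> real mat" where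
  "householder n u = mat n n (\<lambda>(i,j). (if i = j then 1 else 0) - 2 / (u \<bullet> u) * (u $ i * u $ j))"

lemma householder_carrier[simp]: "householder n u \<in> carrier_mat n n"
  unfolding householder_def by auto

lemma householder_transpose: "transpose_mat (householder n u) = householder n u"
  unfolding householder_def by (rule eq_matI) auto

lemma householder_involution:
  assumes u: "u \<in> carrier_vec n" and c: "u \<bullet> u \<noteq> 0"
  shows "householder n u * householder n u = 1\<^sub>m n"
proof (rule eq_matI)
  fix i j assume i: "i < dim_row (1\<^sub>m n)" and j: "j < dim_col (1\<^sub>m n)"
  define a where "a = 2 / (u \<bullet> u)"
  have uu: "u \<bullet> u = (\<Sum>k<n. u $ k * u $ k)"
    using u unfolding scalar_prod_def by (simp add: atLeast0LessThan)
  have "(householder n u * householder n u) $$ (i,j) =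
      (\<Sum>k<n. ((if i = k then 1 else 0) - a * (u $ i * u $ k)) *
              ((if k = j then 1 else 0) - a * (u $ k * u $ j)))"
    using i j unfolding householder_def a_def by (simp add: scalar_prod_def atLeast0LessThan)
  also have "\<dots> = (\<Sum>k<n. (if i = k then 1 else 0) * (if k = j then 1 else 0))
      - a * u $ j * (\<Sum>k<n. (if i = k then 1 else 0) * u $ k)
      - a * u $ i * (\<Sum>k<n. (if k = j then 1 else 0) * u $ k)
      + a * a * u $ i * u $ j * (\<Sum>k<n. u $ k * u $ k)"
    by (simp add: algebra_simps sum_distrib_left sum_subtractf sum.distrib)
  also have "\<dots> = (if i = j then 1 else 0) - 2 * a * u $ i * u $ j + a * a * u $ i * u $ j * (u \<bullet> u)"
    using i j by (simp add: uu if_distrib[of "\<lambda>x. x * _"] cong: if_cong)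
  also have "a * a * u $ i * u $ j * (u \<bullet> u) = 2 * a * u $ i * u $ j"
    using c unfolding a_def by (simp add: field_simps)
  finally show "(householder n u * householder n u) $$ (i,j) = 1\<^sub>m n $$ (i,j)"
    using i j by simp
qed (auto simp: householder_def)

lemma householder_unit_vec:
  assumes w: "w \<in> carrier_vec n" and n: "0 < n" and ww: "w \<bullet> w = 1" and w0: "w $ 0 \<le> 0"
  defines "u \<equiv> w - unit_vec n 0"
  shows "u \<bullet> u \<noteq> 0" and "householder n u *\<^sub>v unit_vec n 0 = w"
proof -
  have ui: "u $ k = w $ k - (if k = 0 then 1 else 0)" if "k < n" for k
    using w that unfolding u_def by (auto simp: unit_vec_def)
  have ww': "(\<Sum>k<n. w $ k * w $ k) = 1"
    using ww w unfolding scalar_prod_def by (simp add: atLeast0LessThan)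
  have "u \<bullet> u = (\<Sum>k<n. (w $ k - (if k = 0 then 1 else 0)) * (w $ k - (if k = 0 then 1 else 0)))"
    using w ui unfolding u_def scalar_prod_def by (simp add: atLeast0LessThan)
  also have "\<dots> = (\<Sum>k<n. w $ k * w $ k) - 2 * (\<Sum>k<n. (if k = 0 then w $ k else 0))
      + (\<Sum>k<n. (if k = 0 then 1 else 0))"
  proof -
    have "(w $ k - (if k = 0 then 1 else 0)) * (w $ k - (if k = 0 then 1 else 0)) =
        w $ k * w $ k - 2 * (if k = 0 then w $ k else 0) + (if k = 0 then 1 else 0)" for k
      by (auto simp: algebra_simps)
    then show ?thesis by (simp add: sum_subtractf sum.distrib flip: sum_distrib_left)
  qed
  also have "\<dots> = 2 - 2 * w $ 0" using n ww' by simp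
  finally have uu: "u \<bullet> u = 2 - 2 * w $ 0" .
  then show "u \<bullet> u \<noteq> 0" using w0 by simp
  show "householder n u *\<^sub>v unit_vec n 0 = w"
  proof (rule eq_vecI)
    fix i assume "i < dim_vec w"
    then have i: "i < n" using w by simp
    have "(householder n u *\<^sub>v unit_vec n 0) $ i = householder n u $$ (i, 0)"
      using i n by (simp add: householder_def scalar_prod_def unit_vec_def
          if_distrib[of "\<lambda>x. _ * x"] cong: if_cong)
    also have "\<dots> = w $ i"
      using i n w0 by (simp add: householder_def uu ui field_simps)
    finally show "(householder n u *\<^sub>v unit_vec n 0) $ i = w $ i" .
  qed (use w in \<open>auto simp: householder_def\<close>)
qed

lemma symmetric_reflection_to_unit_vec:
  assumes "w \<in> carrier_vec n" "0 < n" "w \<bullet> w = 1" "w $ 0 \<le> 0"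
  shows "\<exists>H \<in> O_mat n. transpose_mat H = H \<and> H *\<^sub>v unit_vec n 0 = w"
proof -
  let ?u = "w - unit_vec n 0"
  have "?u \<in> carrier_vec n" using assms(1) by simp
  with householder_unit_vec[OF assms] householder_involution[of ?u n] show ?thesis
    by (intro bexI[of _ "householder n ?u"]) (auto simp: O_mat_def householder_transpose)
qed

text \<open>For a complex eigenvector \<open>w\<close> of a real symmetric matrix, the Hermitian form
  \<open>w\<^sup>* M w\<close> equals its own conjugate and is the eigenvalue times the positive real \<open>w\<^sup>* w\<close>.\<close>

lemma real_symmetric_mat_eigenvalue_real:
  fixes M :: "real mat"
  assumes M: "M \<in> carrier_mat n n" and sym: "transpose_mat M = M"
    and w: "w \<in> carrier_vec n" "w \<noteq> 0\<^sub>v n" "map_mat complex_of_real M *\<^sub>v w = a \<cdot>\<^sub>v w"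
  shows "cnj a = a"
proof -
  have Msym: "M $$ (i,j) = M $$ (j,i)" if "i < n" "j < n" for i j
    using sym M that by (metis carrier_matD index_transpose_mat(1))
  define q where "q = (\<Sum>i<n. \<Sum>j<n. cnj (w $ i) * of_real (M $$ (i,j)) * w $ j)"
  define s where "s = (\<Sum>i<n. cnj (w $ i) * w $ i)"
  have "q = (\<Sum>i<n. cnj (w $ i) * (map_mat complex_of_real M *\<^sub>v w) $ i)"
    unfolding q_def using M w(1)
    by (intro sum.cong refl) (simp add: scalar_prod_def atLeast0LessThan sum_distrib_left mult.assoc)
  also have "\<dots> = a * s"
    unfolding s_def w(3) using w(1) by (simp add: sum_distrib_left algebra_simps)
  finally have qa: "q = a * s" .
  have "cnj q = (\<Sum>i<n. \<Sum>j<n. w $ i * of_real (M $$ (i,j)) * cnj (w $ j))"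
    unfolding q_def by (simp add: cnj_sum)
  also have "\<dots> = (\<Sum>j<n. \<Sum>i<n. w $ i * of_real (M $$ (i,j)) * cnj (w $ j))"
    by (rule sum.swap)
  also have "\<dots> = q"
    unfolding q_def by (intro sum.cong refl) (simp add: Msym mult.commute mult.left_commute)
  finally have cq: "cnj q = q" .
  have s_real: "s = of_real (\<Sum>i<n. (Re (w $ i))\<^sup>2 + (Im (w $ i))\<^sup>2)"
    unfolding s_def of_real_sum by (intro sum.cong refl) (simp add: complex_mult_cnj mult.commute)
  obtain i where i: "i < n" "w $ i \<noteq> 0"
    using w(1,2) by (metis carrier_vecD eq_vecI index_zero_vec)
  have "(\<Sum>i<n. (Re (w $ i))\<^sup>2 + (Im (w $ i))\<^sup>2) > 0"
    by (rule sum_pos2[of _ i]) (use i in \<open>auto simp: complex_eq_iff add_pos_nonneg sum_power2_gt_zero_iff\<close>)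
  then have "s \<noteq> 0" unfolding s_real by (metis of_real_eq_0_iff less_irrefl)
  moreover have "cnj a * s = a * s"
    using cq qa s_real by (metis complex_cnj_complex_of_real complex_cnj_mult)
  ultimately show ?thesis by simp
qed

lemma symmetric_mat_real_eigenvector:
  fixes M :: "real mat"
  assumes M: "M \<in> carrier_mat n n" and n: "0 < n" and sym: "transpose_mat M = M"
  shows "\<exists>v r. v \<in> carrier_vec n \<and> v \<noteq> 0\<^sub>v n \<and> M *\<^sub>v v = r \<cdot>\<^sub>v v"
proof -
  let ?Mc = "map_mat complex_of_real M"
  have Mc: "?Mc \<in> carrier_mat n n" using M by auto
  obtain as where cp: "char_poly ?Mc = (\<Prod>a \<leftarrow> as. [:- a, 1:])" and len: "length as = n"
    using char_poly_factorized[OF Mc] by blast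
  obtain a where a: "a \<in> set as" using len n by (cases as) auto
  have root: "poly (char_poly ?Mc) a = 0"
    unfolding cp using a by (induct as) (auto simp: poly_prod_list)
  then obtain w where w: "w \<in> carrier_vec n" "w \<noteq> 0\<^sub>v n" "?Mc *\<^sub>v w = a \<cdot>\<^sub>v w"
    using eigenvalue_root_char_poly[OF Mc] Mc unfolding eigenvalue_def eigenvector_def by auto
  have "a = of_real (Re a)"
    using real_symmetric_mat_eigenvalue_real[OF M sym w] by (metis Reals_cnj_iff of_real_Re)
  with root have "poly (char_poly ?Mc) (of_real (Re a)) = 0" by simp
  then have "of_real (poly (char_poly M) (Re a)) = (0::complex)"
    unfolding of_real_hom.char_poly_hom[OF M] of_real_hom.poly_map_poly .
  then have "eigenvalue M (Re a)" using eigenvalue_root_char_poly[OF M] by simp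
  then show ?thesis unfolding eigenvalue_def eigenvector_def using M by auto
qed

lemma symmetric_mat_unit_eigenvector:
  fixes M :: "real mat"
  assumes M: "M \<in> carrier_mat n n" and n: "0 < n" and sym: "transpose_mat M = M"
  shows "\<exists>w r. w \<in> carrier_vec n \<and> w \<bullet> w = 1 \<and> w $ 0 \<le> 0 \<and> M *\<^sub>v w = r \<cdot>\<^sub>v w"
proof -
  obtain v r where v: "v \<in> carrier_vec n" "v \<noteq> 0\<^sub>v n" "M *\<^sub>v v = r \<cdot>\<^sub>v v"
    using symmetric_mat_real_eigenvector[OF assms] by blast
  have vv: "v \<bullet> v > 0" using conjugate_square_greater_0_vec[OF v(1)] v(2) by simp
  define k where "k = (if v $ 0 > 0 then -1 else 1) / sqrt (v \<bullet> v)"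
  have "(k \<cdot>\<^sub>v v) \<bullet> (k \<cdot>\<^sub>v v) = 1"
    using v(1) vv by (simp add: k_def power2_eq_square[symmetric])
  moreover have "(k \<cdot>\<^sub>v v) $ 0 \<le> 0"
    using v(1) vv n by (auto simp: k_def divide_simps mult_le_0_iff)
  moreover have "M *\<^sub>v (k \<cdot>\<^sub>v v) = r \<cdot>\<^sub>v (k \<cdot>\<^sub>v v)"
    unfolding mult_mat_vec[OF M v(1)] v(3) by (simp add: smult_smult_assoc mult.commute)
  ultimately show ?thesis using v(1) by (intro exI[of _ "k \<cdot>\<^sub>v v"] exI[of _ r]) auto
qed

lemma symmetric_mat_eigen_block:
  fixes N :: "real mat"
  assumes N: "N \<in> carrier_mat (Suc n) (Suc n)" and sym: "transpose_mat N = N"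
    and eig: "N *\<^sub>v unit_vec (Suc n) 0 = r \<cdot>\<^sub>v unit_vec (Suc n) 0"
  shows "\<exists>A1 A4. A1 \<in> carrier_mat 1 1 \<and> A4 \<in> carrier_mat n n \<and> transpose_mat A4 = A4 \<and>
           N = four_block_mat A1 (0\<^sub>m 1 n) (0\<^sub>m n 1) A4"
proof -
  have col0: "N $$ (i,0) = (if i = 0 then r else 0)" if "i < Suc n" for i
    using arg_cong[OF eig, of "\<lambda>v. v $ i"] that N by simp
  have Nsym: "N $$ (i,j) = N $$ (j,i)" if "i < Suc n" "j < Suc n" for i j
    using sym N that by (metis carrier_matD index_transpose_mat(1))
  obtain A1 A2 A3 A4 where sb: "split_block N 1 1 = (A1,A2,A3,A4)"
    by (cases "split_block N 1 1") auto
  have A1: "A1 \<in> carrier_mat 1 1" and A4: "A4 \<in> carrier_mat n n"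
    and Nb: "N = four_block_mat A1 A2 A3 A4"
    using split_block[OF sb, of n n] N by auto
  have "A2 = 0\<^sub>m 1 n" and "A3 = 0\<^sub>m n 1"
    using sb N unfolding split_block_def Let_def by (auto intro!: eq_matI simp: col0 Nsym[of 0])
  moreover have "transpose_mat A4 = A4"
    using sb N A4 unfolding split_block_def Let_def by (auto intro!: eq_matI simp: Nsym)
  ultimately show ?thesis using A1 A4 Nb by blast
qed

lemma O_mat_block_conj:
  assumes Q: "Q \<in> O_mat n" and A1: "A1 \<in> carrier_mat 1 1" and A4: "A4 \<in> carrier_mat n n"
  defines "Q1 \<equiv> four_block_mat (1\<^sub>m 1) (0\<^sub>m 1 n) (0\<^sub>m n 1) Q"
  shows "Q1 \<in> O_mat (Suc n)"
    and "transpose_mat Q1 * four_block_mat A1 (0\<^sub>m 1 n) (0\<^sub>m n 1) A4 * Q1 =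
           four_block_mat A1 (0\<^sub>m 1 n) (0\<^sub>m n 1) (transpose_mat Q * A4 * Q)"
proof -
  have Qc: "Q \<in> carrier_mat n n" using Q by (rule O_mat_carrier)
  have Q1t: "transpose_mat Q1 = four_block_mat (1\<^sub>m 1) (0\<^sub>m 1 n) (0\<^sub>m n 1) (transpose_mat Q)"
    unfolding Q1_def using Qc by (subst transpose_four_block_mat) auto
  have "transpose_mat Q1 * Q1 = 1\<^sub>m (Suc n)"
    unfolding Q1t unfolding Q1_def using Qc O_mat_left_inverse[OF Q]
    by (subst mult_four_block_mat[of _ 1 1 _ n _ n _ _ 1 _ n]) auto
  then show "Q1 \<in> O_mat (Suc n)" using Qc unfolding O_mat_def Q1_def by auto
  show "transpose_mat Q1 * four_block_mat A1 (0\<^sub>m 1 n) (0\<^sub>m n 1) A4 * Q1 =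
      four_block_mat A1 (0\<^sub>m 1 n) (0\<^sub>m n 1) (transpose_mat Q * A4 * Q)"
    unfolding Q1t unfolding Q1_def using Qc A1 A4
    by (subst mult_four_block_mat[of _ 1 1 _ n _ n _ _ 1 _ n], auto,
        subst mult_four_block_mat[of _ 1 1 _ n _ n _ _ 1 _ n], auto)
qed

text \<open>A Householder reflection moving a unit eigenvector to the first basis vector splits
  off a \<open>1 \<times> 1\<close> block.\<close>

lemma symmetric_mat_deflation:
  fixes M :: "real mat"
  assumes M: "M \<in> carrier_mat (Suc n) (Suc n)" and sym: "transpose_mat M = M"
  shows "\<exists>H \<in> O_mat (Suc n). \<exists>A1 A4. A1 \<in> carrier_mat 1 1 \<and> A4 \<in> carrier_mat n n \<and>
           transpose_mat A4 = A4 \<and> transpose_mat H * M * H = four_block_mat A1 (0\<^sub>m 1 n) (0\<^sub>m n 1) A4"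
proof -
  let ?m = "Suc n"
  obtain w r where w: "w \<in> carrier_vec ?m" "w \<bullet> w = 1" "w $ 0 \<le> 0" and Mw: "M *\<^sub>v w = r \<cdot>\<^sub>v w"
    using symmetric_mat_unit_eigenvector[OF M _ sym] by blast
  obtain H where H: "H \<in> O_mat ?m" and Ht: "transpose_mat H = H" and He: "H *\<^sub>v unit_vec ?m 0 = w"
    using symmetric_reflection_to_unit_vec[OF w(1) _ w(2,3)] by blast
  have Hc: "H \<in> carrier_mat ?m ?m" using H by (rule O_mat_carrier)
  have HH: "H * H = 1\<^sub>m ?m" using O_mat_left_inverse[OF H] by (simp add: Ht)
  define N where "N = H * M * H"
  have N: "N \<in> carrier_mat ?m ?m" unfolding N_def using Hc M by auto
  have "transpose_mat N = transpose_mat H * transpose_mat (H * M)"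
    unfolding N_def by (rule transpose_mult[of _ ?m ?m]) (use Hc M in auto)
  also have "transpose_mat (H * M) = transpose_mat M * transpose_mat H"
    by (rule transpose_mult[of _ ?m ?m]) (use Hc M in auto)
  finally have Nt: "transpose_mat N = N"
    unfolding Ht sym N_def using Hc M by (simp add: assoc_mult_mat[of _ ?m ?m _ ?m _ ?m])
  have Hw: "H *\<^sub>v w = unit_vec ?m 0"
    unfolding He[symmetric] using Hc by (simp flip: assoc_mult_mat_vec add: HH)
  have "N *\<^sub>v unit_vec ?m 0 = H *\<^sub>v (M *\<^sub>v w)"
    unfolding N_def He[symmetric] using Hc M
    by (simp add: assoc_mult_mat_vec[of H ?m ?m "M * H" ?m] assoc_mult_mat_vec[of M ?m ?m H ?m])
  also have "\<dots> = r \<cdot>\<^sub>v unit_vec ?m 0" unfolding Mw mult_mat_vec[OF Hc w(1)] Hw ..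
  finally obtain A1 A4 where A: "A1 \<in> carrier_mat 1 1" "A4 \<in> carrier_mat n n" "transpose_mat A4 = A4"
    and Nb: "N = four_block_mat A1 (0\<^sub>m 1 n) (0\<^sub>m n 1) A4"
    using symmetric_mat_eigen_block[OF N Nt] by blast
  have "transpose_mat H * M * H = four_block_mat A1 (0\<^sub>m 1 n) (0\<^sub>m n 1) A4"
    unfolding Ht N_def[symmetric] Nb ..
  with A H show ?thesis by blast
qed

lemma symmetric_mat_orthogonally_diagonalizable:
  fixes M :: "real mat"
  assumes "M \<in> carrier_mat n n" and "transpose_mat M = M"
  shows "\<exists>Q \<in> O_mat n. diagonal_mat (transpose_mat Q * M * Q)"
  using assms
proof (induction n arbitrary: M)
  case 0
  then show ?case by (intro bexI[of _ "1\<^sub>m 0"]) (auto simp: diagonal_mat_def O_mat_def)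
next
  case (Suc n M)
  let ?m = "Suc n"
  obtain H A1 A4 where H: "H \<in> O_mat ?m" and A1: "A1 \<in> carrier_mat 1 1"
    and A4: "A4 \<in> carrier_mat n n" and A4t: "transpose_mat A4 = A4"
    and HMH: "transpose_mat H * M * H = four_block_mat A1 (0\<^sub>m 1 n) (0\<^sub>m n 1) A4"
    using symmetric_mat_deflation[OF Suc.prems] by blast
  obtain Q' where Q': "Q' \<in> O_mat n" and dg: "diagonal_mat (transpose_mat Q' * A4 * Q')"
    using Suc.IH[OF A4 A4t] by blast
  define Q1 where "Q1 = four_block_mat (1\<^sub>m 1) (0\<^sub>m 1 n) (0\<^sub>m n 1) Q'"
  note Q1 = O_mat_block_conj[OF Q' A1 A4, folded Q1_def]
  have Hc: "H \<in> carrier_mat ?m ?m" and Q1c: "Q1 \<in> carrier_mat ?m ?m"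
    using O_mat_carrier[OF H] O_mat_carrier[OF Q1(1)] .
  have "transpose_mat (H * Q1) * M * (H * Q1) = transpose_mat Q1 * (transpose_mat H * M * H) * Q1"
    using Hc Q1c Suc.prems(1) by (simp add: transpose_mult[of _ ?m ?m] assoc_mult_mat[of _ ?m ?m _ ?m _ ?m])
  also have "\<dots> = four_block_mat A1 (0\<^sub>m 1 n) (0\<^sub>m n 1) (transpose_mat Q' * A4 * Q')"
    unfolding HMH by (rule Q1(2))
  finally have "diagonal_mat (transpose_mat (H * Q1) * M * (H * Q1))"
    using dg A1 A4 O_mat_carrier[OF Q'] unfolding diagonal_mat_def by auto
  moreover have "H * Q1 \<in> O_mat ?m" using H Q1(1) by (rule O_mat_mult)
  ultimately show ?case by blast
qed

section \<open>Singular value decomposition by rotations\<close>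

lemma gram_mat_diag_pos:
  fixes B :: "real mat"
  assumes B: "B \<in> carrier_mat m m" and BB: "transpose_mat B * B = mat_diag m lam"
    and dB: "det B \<noteq> 0" and i: "i < m"
  shows "0 < lam i"
proof -
  have nonneg: "0 \<le> lam k" if "k < m" for k
  proof -
    have "lam k = (\<Sum>l\<in>{0..<m}. B $$ (l,k) * B $$ (l,k))"
      using arg_cong[OF BB, of "\<lambda>A. A $$ (k,k)"] that B by (simp add: scalar_prod_def mat_diag_def)
    also have "\<dots> \<ge> 0" by (rule sum_nonneg) auto
    finally show ?thesis .
  qed
  have "(\<Prod>k<m. lam k) = det (transpose_mat B) * det B"
    unfolding det_mat_diag[symmetric] BB[symmetric] using B by (simp add: det_mult[of _ m])
  also have "\<dots> \<noteq> 0" using B dB by (simp add: det_transpose)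
  finally have "lam i \<noteq> 0" using i by (metis lessThan_iff finite_lessThan prod_zero_iff)
  with nonneg[OF i] show ?thesis by simp
qed

lemma SO_mat_normalizes_orthogonal_columns:
  fixes B :: "real mat"
  assumes B: "B \<in> carrier_mat m m" and BB: "transpose_mat B * B = mat_diag m lam"
    and lam: "\<forall>i<m. 0 < lam i" and dB: "0 < det B"
  shows "\<exists>U \<in> SO_mat m. U * B = mat_diag m (\<lambda>i. sqrt (lam i))"
proof -
  define Si where "Si = mat_diag m (\<lambda>i. 1 / sqrt (lam i))"
  define U where "U = Si * transpose_mat B"
  have Sic: "Si \<in> carrier_mat m m" unfolding Si_def by simp
  have UB: "U * B = Si * mat_diag m lam"
    unfolding U_def BB[symmetric] using B Sic by (simp add: assoc_mult_mat[of _ m m _ m _ m])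
  also have "\<dots> = mat_diag m (\<lambda>i. sqrt (lam i))"
    unfolding Si_def mat_diag_diag using lam by (auto intro!: eq_matI simp: mat_diag_def real_div_sqrt)
  finally have UB': "U * B = mat_diag m (\<lambda>i. sqrt (lam i))" .
  have "transpose_mat U = B * Si" unfolding U_def Si_def using B by (simp add: transpose_mult[of _ m m _ m])
  then have "U * transpose_mat U = Si * (transpose_mat B * B) * Si"
    unfolding U_def using B Sic by (simp add: assoc_mult_mat[of _ m m _ m _ m])
  also have "\<dots> = mat_diag m (\<lambda>i. 1 / sqrt (lam i) * lam i * (1 / sqrt (lam i)))"
    unfolding BB Si_def by simp
  also have "\<dots> = mat_diag m (\<lambda>_. 1)"
    unfolding mat_diag_def using lam by (auto intro!: eq_matI simp: field_simps)
  finally have "transpose_mat U \<in> O_mat m" unfolding O_mat_def using B Sic U_def by auto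
  then have UO: "U \<in> O_mat m" using O_mat_transpose[of "transpose_mat U" m] by simp
  have "det U = det Si * det B"
    unfolding U_def using B Sic by (simp add: det_mult[of _ m] det_transpose)
  moreover have "0 < det Si" unfolding Si_def det_mat_diag using lam by (intro prod_pos) auto
  ultimately have "0 < det U" using dB by simp
  then have "det U = 1" using O_mat_det[OF UO] by auto
  with UO UB' show ?thesis by (auto simp: SO_mat_iff)
qed

lemma SO_singular_value_decomposition:
  fixes D :: "real mat"
  assumes D: "D \<in> carrier_mat m m" and dD: "0 < det D" and m: "0 < m"
  shows "\<exists>U V s. U \<in> SO_mat m \<and> V \<in> SO_mat m \<and> (\<forall>i<m. 0 < s i) \<and> U * D * V = mat_diag m s"
proof -
  define M where "M = transpose_mat D * D"
  have Mc: "M \<in> carrier_mat m m" unfolding M_def using D by auto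
  have "transpose_mat M = M" unfolding M_def using D by (simp add: transpose_mult[of _ m m])
  then obtain Q where Q: "Q \<in> O_mat m" and dg: "diagonal_mat (transpose_mat Q * M * Q)"
    using symmetric_mat_orthogonally_diagonalizable[OF Mc] by blast
  define lam where "lam i = (transpose_mat Q * M * Q) $$ (i,i)" for i
  have "transpose_mat Q * M * Q = mat_diag m lam"
    unfolding lam_def using dg Mc O_mat_carrier[OF Q] by (intro diagonal_mat_eq_mat_diag) auto
  then obtain V where V: "V \<in> SO_mat m" and VMV: "transpose_mat V * M * V = mat_diag m lam"
    using SO_mat_diagonalizes_if_O_mat_does[OF Q m] Mc by blast
  have Vc: "V \<in> carrier_mat m m" using V by (simp add: SO_mat_def)
  define B where "B = D * V"
  have Bc: "B \<in> carrier_mat m m" unfolding B_def using D Vc by auto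
  have BB: "transpose_mat B * B = mat_diag m lam"
    unfolding VMV[symmetric] B_def M_def using D Vc
    by (simp add: transpose_mult[of _ m m] assoc_mult_mat[of _ m m _ m _ m])
  have dB: "det B = det D" unfolding B_def using D V by (simp add: det_mult[of _ m] SO_mat_def)
  have lam: "\<forall>i<m. 0 < lam i" using gram_mat_diag_pos[OF Bc BB] dB dD by simp
  obtain U where U: "U \<in> SO_mat m" and UB: "U * B = mat_diag m (\<lambda>i. sqrt (lam i))"
    using SO_mat_normalizes_orthogonal_columns[OF Bc BB lam] dB dD by auto
  have "U * D * V = U * B"
    unfolding B_def using D Vc U by (simp add: assoc_mult_mat[of _ m m _ m _ m] SO_mat_def)
  with U V UB lam show ?thesis by (intro exI[of _ U] exI[of _ V] exI[of _ "\<lambda>i. sqrt (lam i)"]) auto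
qed

section \<open>Ordering the singular values\<close>

definition perm_mat :: "nat \<Rightarrow> (nat \<Rightarrow> nat) \<Rightarrow> real mat" where
  "perm_mat n p = mat n n (\<lambda>(i,j). if i = p j then 1 else 0)"

lemma perm_mat_carrier[simp]: "perm_mat n p \<in> carrier_mat n n"
  unfolding perm_mat_def by simp

lemma perm_mat_conj_diag:
  assumes p: "p permutes {0..<n}"
  shows "transpose_mat (perm_mat n p) * mat_diag n f * perm_mat n p = mat_diag n (\<lambda>i. f (p i))"
proof (rule eq_matI)
  fix i j assume "i < dim_row (mat_diag n (\<lambda>i. f (p i)))" "j < dim_col (mat_diag n (\<lambda>i. f (p i)))"
  then have i: "i < n" and j: "j < n" by (auto simp: mat_diag_def)
  have "(transpose_mat (perm_mat n p) * mat_diag n f * perm_mat n p) $$ (i,j) =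
      (\<Sum>l\<in>{0..<n}. (if l = p i then 1 else 0) * (f l * (if l = p j then 1 else 0)))"
    using i j by (simp add: assoc_mult_mat[of _ n n _ n _ n] mat_diag_mult_left[of _ n n]
        perm_mat_def scalar_prod_def)
  also have "\<dots> = (if p i = p j then f (p i) else 0)"
    using permutes_in_image[OF p, of i] i by (simp add: if_distrib[of "\<lambda>x. x * _"] cong: if_cong)
  also have "\<dots> = mat_diag n (\<lambda>i. f (p i)) $$ (i,j)"
    using i j permutes_inj[OF p] by (auto simp: mat_diag_def dest: injD)
  finally show "(transpose_mat (perm_mat n p) * mat_diag n f * perm_mat n p) $$ (i,j) =
      mat_diag n (\<lambda>i. f (p i)) $$ (i,j)" .
qed (auto simp: mat_diag_def perm_mat_def)

lemma perm_mat_O_mat: "p permutes {0..<n} \<Longrightarrow> perm_mat n p \<in> O_mat n"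
  using perm_mat_conj_diag[of p n "\<lambda>_. 1"]
  by (simp add: O_mat_def right_mult_one_mat[of "transpose_mat (perm_mat n p)" n n])

lemma SO_mat_permutes_diag:
  assumes "0 < n" and p: "p permutes {0..<n}"
  shows "\<exists>P \<in> SO_mat n. \<forall>f. transpose_mat P * mat_diag n f * P = mat_diag n (\<lambda>i. f (p i))"
proof -
  obtain P where "P \<in> SO_mat n" and conj: "\<forall>A \<in> carrier_mat n n. \<forall>f.
      transpose_mat (perm_mat n p) * A * perm_mat n p = mat_diag n f \<longrightarrow>
      transpose_mat P * A * P = mat_diag n f"
    using SO_mat_diagonalizes_if_O_mat_does[OF perm_mat_O_mat[OF p] assms(1)] by blast
  with conj[rule_format, OF mat_diag_dim perm_mat_conj_diag[OF p]] show ?thesis by blast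
qed

lemma permutes_ends:
  fixes i j m :: nat
  assumes "i < m" "j < m" "i \<noteq> j"
  shows "\<exists>p. p permutes {0..<m} \<and> p 0 = i \<and> p (m - 1) = j"
proof -
  define t where "t = Transposition.transpose 0 i"
  have tj: "t j < m" "t j \<noteq> 0" unfolding t_def using assms by (auto simp: transpose_def)
  define p where "p = t \<circ> Transposition.transpose (m - 1) (t j)"
  have "p permutes {0..<m}"
    unfolding p_def t_def using assms tj by (intro permutes_compose permutes_swap_id) (auto simp: t_def)
  moreover have "p 0 = i" "p (m - 1) = j"
    unfolding p_def using tj assms by (auto simp: t_def transpose_def)
  ultimately show ?thesis by blast
qed

lemma SO_mat_if_singular_values_equal:
  fixes D :: "real mat"
  assumes D: "D \<in> carrier_mat m m" and dD: "det D = 1" and m: "0 < m"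
    and U: "U \<in> SO_mat m" and V: "V \<in> SO_mat m" and c: "0 < c"
    and UDV: "U * D * V = mat_diag m (\<lambda>_. c)"
  shows "D \<in> SO_mat m"
proof -
  have Uc: "U \<in> carrier_mat m m" and Vc: "V \<in> carrier_mat m m" using U V by (auto simp: SO_mat_def)
  have "c ^ m = det (U * D * V)" unfolding UDV det_mat_diag by simp
  also have "\<dots> = det U * det D * det V" using Uc Vc D by (simp add: det_mult[of _ m])
  also have "\<dots> = 1" using U V dD by (simp add: SO_mat_def)
  finally have "c = 1" using power_eq_iff_eq_base[of m c 1] c m by auto
  then have UDV1: "U * D * V = 1\<^sub>m m" unfolding UDV by simp
  have "D = (transpose_mat U * U) * D * (V * transpose_mat V)"
    using D U V O_mat_left_inverse[of U m] O_mat_right_inverse[of V m] by (simp add: SO_mat_iff)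
  also have "\<dots> = transpose_mat U * (U * D * V) * transpose_mat V"
    using D Uc Vc by (simp add: assoc_mult_mat[of _ m m _ m _ m])
  also have "\<dots> = transpose_mat U * transpose_mat V" unfolding UDV1 using Uc Vc by simp
  finally show ?thesis using SO_mat_mult SO_mat_transpose U V by metis
qed

lemma singular_values_differ_if_not_SO_mat:
  fixes D :: "real mat"
  assumes D: "D \<in> carrier_mat m m" and dD: "det D = 1" and m: "0 < m"
    and U: "U \<in> SO_mat m" and V: "V \<in> SO_mat m" and s: "\<forall>i<m. 0 < s i"
    and UDV: "U * D * V = mat_diag m s" and D_not_SO: "D \<notin> SO_mat m"
  shows "\<exists>i j. i < m \<and> j < m \<and> s j < s i"
proof (rule ccontr)
  assume none: "\<not> (\<exists>i j. i < m \<and> j < m \<and> s j < s i)"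
  have eq: "s i = s 0" if "i < m" for i
  proof -
    have "\<not> s i < s 0" "\<not> s 0 < s i" using that none m by auto
    then show ?thesis by simp
  qed
  have "mat_diag m s = mat_diag m (\<lambda>_. s 0)"
    by (rule eq_matI) (auto simp: mat_diag_def intro: eq)
  then have "D \<in> SO_mat m"
    by (intro SO_mat_if_singular_values_equal[OF D dD m U V, of "s 0"]) (use UDV s m in simp_all)
  with D_not_SO show False ..
qed

lemma SL_mat_not_SO_mat_svd:
  fixes D :: "real mat"
  assumes "D \<in> SL_mat (d + 1)" and "D \<notin> SO_mat (d + 1)"
  shows "\<exists>U V t. U \<in> SO_mat (d + 1) \<and> V \<in> SO_mat (d + 1) \<and> (\<forall>i<d + 1. 0 < t i) \<and>
           t d < t 0 \<and> U * D * V = mat_diag (d + 1) t"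
proof -
  define m where "m = d + 1"
  have m: "0 < m" unfolding m_def by simp
  have D: "D \<in> carrier_mat m m" and dD: "det D = 1" using assms(1) by (auto simp: SL_mat_def m_def)
  obtain U V s where U: "U \<in> SO_mat m" and V: "V \<in> SO_mat m" and s: "\<forall>i<m. 0 < s i"
    and UDV: "U * D * V = mat_diag m s"
    using SO_singular_value_decomposition[OF D _ m] dD by auto
  obtain i j where ij: "i < m" "j < m" "s j < s i"
    using singular_values_differ_if_not_SO_mat[OF D dD m U V s UDV assms(2)[folded m_def]] by blast
  have "i \<noteq> j" and "m - 1 = d" using ij(3) by (auto simp: m_def)
  then obtain p where p: "p permutes {0..<m}" "p 0 = i" "p d = j"
    using permutes_ends[OF ij(1,2)] by metis
  obtain P where P: "P \<in> SO_mat m"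
    and Pconj: "transpose_mat P * mat_diag m s * P = mat_diag m (\<lambda>k. s (p k))"
    using SO_mat_permutes_diag[OF m p(1)] by auto
  have "P \<in> carrier_mat m m" "U \<in> carrier_mat m m" "V \<in> carrier_mat m m"
    using P U V by (simp_all add: SO_mat_def)
  then have "transpose_mat P * U * D * (V * P) = transpose_mat P * (U * D * V) * P"
    using D by (simp add: assoc_mult_mat[of _ m m _ m _ m])
  then have "transpose_mat P * U * D * (V * P) = mat_diag m (\<lambda>k. s (p k))"
    unfolding UDV Pconj .
  moreover have "\<forall>k<m. 0 < s (p k)" using s permutes_in_image[OF p(1)] by simp
  moreover have "transpose_mat P * U \<in> SO_mat m" "V * P \<in> SO_mat m"
    using SO_mat_mult[OF SO_mat_transpose[OF P] U] SO_mat_mult[OF V P] .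
  moreover have "s (p d) < s (p 0)" using ij p by simp
  ultimately show ?thesis
    unfolding m_def[symmetric] by (intro exI[of _ "transpose_mat P * U"] exI[of _ "V * P"] exI[of _ "\<lambda>k. s (p k)"]) simp
qed

section \<open>The diagonal word\<close>

lemma mat_inv_svd:
  fixes D :: "real mat"
  assumes D: "D \<in> carrier_mat m m" and U: "U \<in> SO_mat m" and V: "V \<in> SO_mat m"
    and t: "\<forall>i<m. t i \<noteq> 0" and UDV: "U * D * V = mat_diag m t"
  shows "mat_inv m D = V * mat_diag m (\<lambda>k. 1 / t k) * U"
proof -
  have Uc: "U \<in> carrier_mat m m" and Vc: "V \<in> carrier_mat m m"
    using U V by (auto simp: SO_mat_def)
  have UtU: "transpose_mat U * U = 1\<^sub>m m" and VtV: "transpose_mat V * V = 1\<^sub>m m"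
    and UUt: "U * transpose_mat U = 1\<^sub>m m" and VVt: "V * transpose_mat V = 1\<^sub>m m"
    using U V O_mat_left_inverse O_mat_right_inverse by (auto simp: SO_mat_iff)
  let ?S = "mat_diag m t" and ?Si = "mat_diag m (\<lambda>k. 1 / t k)"
  note asc = assoc_mult_mat[of _ m m _ m _ m] mult_carrier_mat[of _ m m _ m]
  have SSi: "?S * ?Si = 1\<^sub>m m" "?Si * ?S = 1\<^sub>m m"
    unfolding mat_diag_diag using t by (auto simp: mat_diag_def intro!: eq_matI)
  have "transpose_mat U * ?S * transpose_mat V = (transpose_mat U * U) * D * (V * transpose_mat V)"
    unfolding UDV[symmetric] using D Uc Vc by (simp add: asc)
  then have Deq: "D = transpose_mat U * ?S * transpose_mat V" using D by (simp add: UtU VVt)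
  show ?thesis
  proof (rule mat_inv_eqI[OF D])
    have "D * (V * ?Si * U) = transpose_mat U * (?S * (transpose_mat V * V) * ?Si) * U"
      unfolding Deq using Uc Vc by (simp add: asc)
    then show "D * (V * ?Si * U) = 1\<^sub>m m" using Uc by (simp add: VtV SSi UtU del: mat_diag_diag)
    have "V * ?Si * U * D = V * (?Si * (U * transpose_mat U) * ?S) * transpose_mat V"
      unfolding Deq using Uc Vc by (simp add: asc)
    then show "V * ?Si * U * D = 1\<^sub>m m" using Vc by (simp add: UUt SSi VVt del: mat_diag_diag)
  qed (use Uc Vc in \<open>simp add: asc\<close>)
qed

text \<open>With \<open>S = diag t = U D V\<close>, the rotations below reduce the word \<open>R\<^sub>0 D R\<^sub>1 D\<^sup>-\<^sup>1 R\<^sub>2\<close> to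
  \<open>S P\<^sup>T S\<^sup>-\<^sup>1 P\<close> for the rotation \<open>P\<close> permuting the diagonal by \<open>\<sigma>\<close>.\<close>

lemma word_prod_permuted_singular_value_ratios:
  fixes D :: "real mat"
  assumes D: "D \<in> carrier_mat m m" and m: "0 < m"
    and U: "U \<in> SO_mat m" and V: "V \<in> SO_mat m" and t: "\<forall>i<m. 0 < t i"
    and UDV: "U * D * V = mat_diag m t" and \<sigma>: "\<sigma> permutes {0..<m}"
  shows "\<exists>R a. (\<forall>k\<le>2. R k \<in> SO_mat m) \<and> (\<forall>k\<in>{1..2}. a k \<in> {-1, 1}) \<and>
           word_prod m D R a 2 = mat_diag m (\<lambda>k. t k / t (\<sigma> k))"
proof -
  obtain P where P: "P \<in> SO_mat m"
    and Pconj: "transpose_mat P * mat_diag m (\<lambda>k. 1 / t k) * P = mat_diag m (\<lambda>k. 1 / t (\<sigma> k))"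
    using SO_mat_permutes_diag[OF m \<sigma>] by blast
  have Uc: "U \<in> carrier_mat m m" and Vc: "V \<in> carrier_mat m m" and Pc: "P \<in> carrier_mat m m"
    using U V P by (auto simp: SO_mat_def)
  have VtV: "transpose_mat V * V = 1\<^sub>m m" and UUt: "U * transpose_mat U = 1\<^sub>m m"
    using U V O_mat_left_inverse O_mat_right_inverse by (auto simp: SO_mat_iff)
  have Dinv: "mat_inv m D = V * mat_diag m (\<lambda>k. 1 / t k) * U"
    by (rule mat_inv_svd[OF D U V _ UDV]) (use t in auto)
  note asc = assoc_mult_mat[of _ m m _ m _ m] mult_carrier_mat[of _ m m _ m]
  define R where "R k = (if k = 0 then U else if k = 1 then V * transpose_mat P * transpose_mat V
    else transpose_mat U * P)" for k :: nat
  define a where "a k = (if k = 1 then 1 else -1 :: int)" for k :: nat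
  have "word_prod m D R a 2 = U * D * (V * transpose_mat P * transpose_mat V) *
      (V * mat_diag m (\<lambda>k. 1 / t k) * U) * (transpose_mat U * P)"
    by (simp add: numeral_2_eq_2 R_def a_def mat_pm_pow_def Dinv)
  also have "\<dots> = (U * D * V) *
      (transpose_mat P * ((transpose_mat V * V) * mat_diag m (\<lambda>k. 1 / t k) * (U * transpose_mat U)) * P)"
    using D Uc Vc Pc by (simp add: asc)
  also have "\<dots> = mat_diag m (\<lambda>k. t k / t (\<sigma> k))"
    unfolding UDV VtV UUt using Pc by (simp add: asc Pconj[unfolded asc])
  finally have "word_prod m D R a 2 = mat_diag m (\<lambda>k. t k / t (\<sigma> k))" .
  moreover have "\<forall>k\<le>2. R k \<in> SO_mat m"
    unfolding R_def using U V P by (auto intro!: SO_mat_mult SO_mat_transpose)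
  moreover have "\<forall>k\<in>{1..2}. a k \<in> {-1, 1}" unfolding a_def by auto
  ultimately show ?thesis by blast
qed

lemma transposition_ratio_inequalities:
  fixes t :: "nat \<Rightarrow> real"
  assumes t: "\<forall>i<d + 1. 0 < t i" and td: "t d < t 0"
  defines "r k \<equiv> t (k - 1) / t (Transposition.transpose 0 d (k - 1))"
  shows "0 < r (d + 1)" and "\<forall>i\<in>{1..d}. r (d + 1) < r i"
    and "\<forall>i\<in>{2..d}. r i ^ d < (\<Prod>j\<in>{1..d}. r j)"
proof -
  have d: "0 < d" using td by (cases d) auto
  have pos: "0 < t 0" "0 < t d" using t by auto
  have r1: "r 1 = t 0 / t d" and rd: "r (d + 1) = t d / t 0" unfolding r_def by simp_all
  have rmid: "r k = 1" if "2 \<le> k" "k \<le> d" for k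
  proof -
    have "k - 1 \<noteq> 0" "k - 1 \<noteq> d" "0 < t (k - 1)" using that t by auto
    then show ?thesis unfolding r_def by (simp add: transpose_def)
  qed
  have "(\<Prod>k\<in>{1..d}. r k) = r 1 * (\<Prod>k\<in>{2..d}. r k)"
    using d by (simp add: prod.atLeast_Suc_atMost numeral_2_eq_2)
  then have prod: "(\<Prod>k\<in>{1..d}. r k) = r 1" using rmid by simp
  have lt1: "r (d + 1) < 1" and gt1: "1 < r 1" unfolding rd r1 using pos td by simp_all
  have "1 \<le> r k" if "k \<in> {1..d}" for k
    using that gt1 rmid[of k] by (cases "k = 1") auto
  then show "\<forall>i\<in>{1..d}. r (d + 1) < r i" using lt1 by fastforce
  show "\<forall>i\<in>{2..d}. r i ^ d < (\<Prod>j\<in>{1..d}. r j)" using rmid prod gt1 by simp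
  show "0 < r (d + 1)" unfolding rd using pos by simp
qed

theorem mainTheorem16:
  fixes d :: nat and D :: "real mat"
  assumes "D \<in> SL_mat (d + 1)" and "D \<notin> SO_mat (d + 1)"
  shows "\<exists>(n::nat) (R :: nat \<Rightarrow> real mat) (a :: nat \<Rightarrow> int) (r :: nat \<Rightarrow> real).
           n > 0 \<and>
           (\<forall>i\<le>n. R i \<in> SO_mat (d + 1)) \<and>
           (\<forall>i\<in>{1..n}. a i \<in> {-1, 1}) \<and>
           word_prod (d + 1) D R a n = mat_diag (d + 1) (\<lambda>i. r (i + 1)) \<and>
           0 < r (d + 1) \<and>
           (\<forall>i\<in>{1..d}. r (d + 1) < r i) \<and>
           (\<forall>i\<in>{2..d}. r i ^ d < (\<Prod>j\<in>{1..d}. r j))"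
proof -
  obtain U V t where U: "U \<in> SO_mat (d + 1)" and V: "V \<in> SO_mat (d + 1)"
    and t: "\<forall>i<d + 1. 0 < t i" and td: "t d < t 0" and UDV: "U * D * V = mat_diag (d + 1) t"
    using SL_mat_not_SO_mat_svd[OF assms] by blast
  let ?\<tau> = "Transposition.transpose 0 d"
  have D: "D \<in> carrier_mat (d + 1) (d + 1)" using assms(1) by (simp add: SL_mat_def)
  have \<tau>: "?\<tau> permutes {0..<d + 1}" by (intro permutes_swap_id) auto
  obtain R a where R: "\<forall>k\<le>2. R k \<in> SO_mat (d + 1)" and a: "\<forall>k\<in>{1..2}. a k \<in> {-1, 1}"
    and W: "word_prod (d + 1) D R a 2 = mat_diag (d + 1) (\<lambda>k. t k / t (?\<tau> k))"
    using word_prod_permuted_singular_value_ratios[OF D _ U V t UDV \<tau>] by auto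
  define r where "r k = t (k - 1) / t (?\<tau> (k - 1))" for k
  have "word_prod (d + 1) D R a 2 = mat_diag (d + 1) (\<lambda>i. r (i + 1))"
    unfolding W r_def by simp
  with R a transposition_ratio_inequalities[OF t td, folded r_def] show ?thesis
    by (intro exI[of _ 2] exI[of _ R] exI[of _ a] exI[of _ r]) simp
qed

end
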